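(* There is an absolute constant $c>0$ such that the following holds. Let $v_1,\dots,v_n$ be distinct non-negative integers, $s_1,\dots,s_n\in[0,1)$, and $f(x):=\sum_{i=1}^n e^{2\pi\imath s_i}x^{v_i}$. Then for every $t\in\mathbb{R}$, $$B(s_1+v_1t,\dots,s_n+v_nt)\ \le\ c\Big(1+\sum_{k=1}^n\frac{|f^{(k)}|_m}{k}\Big).$$
   Context: For $r\in\mathbb{R}$, $\{r\}:=r-\lfloor r\rfloor$. The bias is $B(r_1,\dots,r_n):=\sup_{0\le a\le b\le1}\big|\,|\{i:\{r_i\}\in[a,b]\}|-n(b-a)\big|$. For a complex polynomial $g(x)=\sum_i a_ix^i$, $|g|_m:=\max_{|x|=1}|g(x)|$ (maximum over the unit circle), and for a positive integer $k$, the Hadamard power is $g^{(k)}(x):=\sum_i a_i^kx^i$. *)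

theory Defs
  imports "HOL-Analysis.Analysis" "HOL-Computational_Algebra.Polynomial"
begin

definition bias :: "nat \<Rightarrow> (nat \<Rightarrow> real) \<Rightarrow> real" where
  "bias n r = (SUP ab \<in> {(a,b). 0 \<le> a \<and> a \<le> b \<and> b \<le> (1::real)}.
      \<bar>real (card {i. i < n \<and> frac (r i) \<in> {fst ab..snd ab}}) - real n * (snd ab - fst ab)\<bar>)"

definition circ_norm :: "complex poly \<Rightarrow> real" where
  "circ_norm g = (SUP z \<in> sphere (0::complex) 1. cmod (poly g z))"

definition hadamard_pow :: "complex poly \<Rightarrow> nat \<Rightarrow> complex poly" where
  "hadamard_pow g k = Poly (map (\<lambda>i. coeff g i ^ k) [0..<Suc (degree g)])"

end

theory Submission
  imports Defs
begin

text \<open>An Erdos--Turan inequality proved with the Fejer kernel.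
  For points \<open>y\<^sub>i \<in> [0,1)\<close>, the deviation of the number of points in \<open>[a,b]\<close> from \<open>N(b-a)\<close>
  is a difference of two values of the sawtooth sums \<open>P(x) = \<Sum>\<^sub>i \<psi>(x - y\<^sub>i)\<close>,
  \<open>\<psi>(x) = 1/2 - {x}\<close>, of \<open>y\<close> and of \<open>-y\<close>. Since \<open>P\<close> decreases with slope at most \<open>N\<close>, a value
  \<open>|P(x\<^sub>0)| = m\<close> persists with modulus at least \<open>m/2\<close> on an interval of length \<open>m/(2N)\<close>;
  the Fejer kernel \<open>F\<^sub>N\<close> centred there has mass \<open>1\<close>, all but \<open>4/m\<close> of it on that interval,
  so \<open>\<integral> P F\<^sub>N \<ge> m/2 - 2 - 4 sup|P|/m\<close>. On the other hand \<open>\<psi>\<close> has Fourier coefficients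
  \<open>sin(2\<pi>jw)/(2\<pi>j)\<close> and \<open>F\<^sub>N\<close> has frequencies below \<open>N\<close>, so the integral is at most
  \<open>\<Sum>\<^sub>k\<^sub><\<^sub>N |\<Sum>\<^sub>i e(k y\<^sub>i)|/(\<pi>k)\<close>. Choosing \<open>x\<^sub>0\<close> with \<open>|P(x\<^sub>0)| > sup|P|/2\<close> bounds \<open>sup|P|\<close>, hence the bias.
  Finally, for \<open>y\<^sub>i = {s\<^sub>i + v\<^sub>i t}\<close> the exponential sum \<open>\<Sum>\<^sub>i e(k y\<^sub>i)\<close> is the value of the
  Hadamard power \<open>f\<^sup>(\<^sup>k\<^sup>)\<close> at \<open>e(kt)\<close>, so it is bounded by \<open>|f\<^sup>(\<^sup>k\<^sup>)|\<^sub>m\<close>.\<close>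

section \<open>Fourier coefficients of the sawtooth\<close>

definition sawtooth :: "real \<Rightarrow> real" where
  "sawtooth x = 1/2 - frac x"

lemma abs_sawtooth_le: "\<bar>sawtooth x\<bar> \<le> 1/2"
  using frac_lt_1[of x] frac_ge_0[of x] unfolding sawtooth_def by linarith

lemma has_integral_real_derivative:
  fixes f f' :: "real \<Rightarrow> real"
  assumes "a \<le> b" "\<And>x. x \<in> {a..b} \<Longrightarrow> (f has_real_derivative f' x) (at x)"
  shows "(f' has_integral (f b - f a)) {a..b}"
  using assms by (intro fundamental_theorem_of_calculus)
     (auto intro: has_field_derivative_at_within simp: has_real_derivative_iff_has_vector_derivative[symmetric])

text \<open>On \<open>[-1/2, 1/2]\<close> the function \<open>t \<mapsto> sawtooth (w + t)\<close> has a single jump, at the point \<open>c\<close>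
  where \<open>w + c\<close> is an integer, and equals \<open>c \<mp> 1/2 - t\<close> to the left and to the right of it.\<close>

lemma sawtooth_mult_has_integral:
  fixes w :: real and g :: "real \<Rightarrow> real" and \<Phi> :: "real \<Rightarrow> real \<Rightarrow> real"
  assumes \<Phi>: "\<And>\<alpha> a b. a \<le> b \<Longrightarrow> ((\<lambda>t. (\<alpha> - t) * g t) has_integral (\<Phi> \<alpha> b - \<Phi> \<alpha> a)) {a..b}"
  defines "c \<equiv> real_of_int \<lfloor>w + 1/2\<rfloor> - w"
  shows "((\<lambda>t. sawtooth (w + t) * g t) has_integral
     (\<Phi> (c - 1/2) c - \<Phi> (c - 1/2) (-1/2) + (\<Phi> (c + 1/2) (1/2) - \<Phi> (c + 1/2) c))) {-1/2..1/2}"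
proof -
  define p where "p = \<lfloor>w + 1/2\<rfloor>"
  have c: "c = real_of_int p - w" by (simp add: c_def p_def)
  have p: "real_of_int p \<le> w + 1/2" "w + 1/2 < real_of_int p + 1"
    unfolding p_def by linarith+
  have c_bounds: "-1/2 < c" "c \<le> 1/2" using p c by linarith+
  have left: "((\<lambda>t. sawtooth (w + t) * g t) has_integral (\<Phi> (c - 1/2) c - \<Phi> (c - 1/2) (-1/2))) {-1/2..c}"
  proof (rule has_integral_spike_finite[of "{c}"])
    show "((\<lambda>t. (c - 1/2 - t) * g t) has_integral (\<Phi> (c - 1/2) c - \<Phi> (c - 1/2) (-1/2))) {-1/2..c}"
      using \<Phi> c_bounds by simp
    fix t assume t: "t \<in> {-1/2..c} - {c}"
    have "\<lfloor>w + t\<rfloor> = p - 1" using t c p by (intro floor_unique) auto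
    then show "sawtooth (w + t) * g t = (c - 1/2 - t) * g t" using c by (simp add: sawtooth_def frac_def)
  qed simp
  have right: "((\<lambda>t. sawtooth (w + t) * g t) has_integral (\<Phi> (c + 1/2) (1/2) - \<Phi> (c + 1/2) c)) {c..1/2}"
  proof (rule has_integral_spike_finite[of "{}"])
    show "((\<lambda>t. (c + 1/2 - t) * g t) has_integral (\<Phi> (c + 1/2) (1/2) - \<Phi> (c + 1/2) c)) {c..1/2}"
      using \<Phi> c_bounds by simp
    fix t assume t: "t \<in> {c..1/2} - {}"
    have "\<lfloor>w + t\<rfloor> = p" using t c p by (intro floor_unique) auto
    then show "sawtooth (w + t) * g t = (c + 1/2 - t) * g t" using c by (simp add: sawtooth_def frac_def)
  qed simp
  show ?thesis using has_integral_combine[OF _ _ left right] c_bounds by simp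
qed

lemma linear_times_cos_has_integral:
  fixes \<omega> :: real assumes "\<omega> \<noteq> 0" "a \<le> b"
  defines "\<Phi> \<equiv> \<lambda>\<alpha> t. (\<alpha> - t) * sin (\<omega> * t) / \<omega> - cos (\<omega> * t) / (\<omega> * \<omega>)"
  shows "((\<lambda>t. (\<alpha> - t) * cos (\<omega> * t)) has_integral (\<Phi> \<alpha> b - \<Phi> \<alpha> a)) {a..b}"
proof (rule has_integral_real_derivative[OF \<open>a \<le> b\<close>])
  fix x
  have "(\<Phi> \<alpha> has_real_derivative
     ((- 1) * sin (\<omega> * x) + (\<alpha> - x) * (cos (\<omega> * x) * \<omega>)) / \<omega> - (- sin (\<omega> * x) * \<omega>) / (\<omega> * \<omega>)) (at x)"
    unfolding \<Phi>_def using assms(1) by (auto intro!: derivative_eq_intros)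
  moreover have "((- 1) * sin (\<omega> * x) + (\<alpha> - x) * (cos (\<omega> * x) * \<omega>)) / \<omega> - (- sin (\<omega> * x) * \<omega>) / (\<omega> * \<omega>)
      = (\<alpha> - x) * cos (\<omega> * x)"
    using assms(1) by (simp add: field_simps)
  ultimately show "(\<Phi> \<alpha> has_real_derivative (\<alpha> - x) * cos (\<omega> * x)) (at x)" by simp
qed

lemma linear_has_integral:
  fixes \<alpha> a b :: real assumes "a \<le> b"
  shows "((\<lambda>t. (\<alpha> - t) * 1) has_integral ((\<alpha> * b - b^2/2) - (\<alpha> * a - a^2/2))) {a..b}"
  by (rule has_integral_real_derivative[OF assms]) (auto intro!: derivative_eq_intros simp: field_simps)

lemma cos_int_has_integral:
  fixes j :: int
  shows "((\<lambda>t. cos (2 * pi * j * t)) has_integral (if j = 0 then 1 else 0)) {-1/2..1/2}"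
proof (cases "j = 0")
  case True
  then show ?thesis using has_integral_const_real[of "1::real" "-1/2" "1/2"] by simp
next
  case False
  have "((\<lambda>t. cos (2 * pi * j * t)) has_integral
      (sin (2 * pi * j * (1/2)) / (2 * pi * j) - sin (2 * pi * j * (-1/2)) / (2 * pi * j))) {-1/2..1/2}"
    using False by (intro has_integral_real_derivative) (auto intro!: derivative_eq_intros)
  moreover have "sin (2 * pi * j * (1/2)) = 0" "sin (2 * pi * j * (-1/2)) = 0"
    by (simp_all add: sin_times_pi_eq_0 mult.commute)
  ultimately show ?thesis using False by simp
qed

definition sawtooth_coeff :: "real \<Rightarrow> int \<Rightarrow> real" where
  "sawtooth_coeff w j = (if j = 0 then 0 else sin (2 * pi * j * w) / (2 * pi * j))"

lemma sawtooth_cos_has_integral: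
  fixes j :: int
  shows "((\<lambda>t. sawtooth (w + t) * cos (2 * pi * j * t)) has_integral sawtooth_coeff w j) {-1/2..1/2}"
proof (cases "j = 0")
  case True
  have "((\<lambda>t. sawtooth (w + t) * 1) has_integral 0) {-1/2..1/2}"
    using sawtooth_mult_has_integral[OF linear_has_integral, of w]
    by (simp add: field_simps power2_eq_square)
  then show ?thesis using True by (simp add: sawtooth_coeff_def)
next
  case False
  define \<omega> where "\<omega> = 2 * pi * j"
  have \<omega>: "\<omega> \<noteq> 0" using False by (simp add: \<omega>_def)
  define c where "c = real_of_int \<lfloor>w + 1/2\<rfloor> - w"
  define \<Phi> where "\<Phi> = (\<lambda>\<alpha> t. (\<alpha> - t) * sin (\<omega> * t) / \<omega> - cos (\<omega> * t) / (\<omega> * \<omega>))"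
  have "((\<lambda>t. sawtooth (w + t) * cos (\<omega> * t)) has_integral
     (\<Phi> (c - 1/2) c - \<Phi> (c - 1/2) (-1/2) + (\<Phi> (c + 1/2) (1/2) - \<Phi> (c + 1/2) c))) {-1/2..1/2}"
    unfolding c_def \<Phi>_def by (rule sawtooth_mult_has_integral[OF linear_times_cos_has_integral[OF \<omega>]])
  moreover have "\<Phi> (c - 1/2) c - \<Phi> (c - 1/2) (-1/2) + (\<Phi> (c + 1/2) (1/2) - \<Phi> (c + 1/2) c)
      = sin (\<omega> * w) / \<omega>"
  proof -
    have "sin (\<omega> * (1/2)) = 0" "sin (\<omega> * (-1/2)) = 0"
      by (simp_all add: \<omega>_def sin_times_pi_eq_0 mult.commute)
    moreover have "cos (\<omega> * (-1/2)) = cos (\<omega> * (1/2))"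
      by (metis cos_minus minus_divide_left mult_minus_right)
    moreover have "sin (\<omega> * c) = - sin (\<omega> * w)"
    proof -
      define n where "n = j * \<lfloor>w + 1/2\<rfloor>"
      have "\<omega> * c = 2 * pi * real_of_int n - \<omega> * w"
        by (simp add: \<omega>_def c_def n_def algebra_simps)
      then show ?thesis by (simp add: sin_diff)
    qed
    ultimately show ?thesis unfolding \<Phi>_def using \<omega> by (simp add: field_simps)
  qed
  ultimately show ?thesis using False by (simp add: sawtooth_coeff_def \<omega>_def)
qed

section \<open>The Fejer kernel\<close>

definition fejer :: "nat \<Rightarrow> real \<Rightarrow> real" where
  "fejer K t = (1 / real K) * ((\<Sum>m<K. cos (2 * pi * real m * t))\<^sup>2 + (\<Sum>m<K. sin (2 * pi * real m * t))\<^sup>2)"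

lemma fejer_nonneg: "0 \<le> fejer K t"
  unfolding fejer_def by simp

lemma fejer_eq_cos_sum:
  "fejer K t = (1 / real K) * (\<Sum>m<K. \<Sum>m'<K. cos (2 * pi * real_of_int (int m - int m') * t))"
proof -
  have "(\<Sum>m<K. cos (2 * pi * real m * t))\<^sup>2 + (\<Sum>m<K. sin (2 * pi * real m * t))\<^sup>2
     = (\<Sum>m<K. \<Sum>m'<K. cos (2 * pi * real m * t) * cos (2 * pi * real m' * t)
                        + sin (2 * pi * real m * t) * sin (2 * pi * real m' * t))"
    by (simp add: power2_eq_square sum_product sum.distrib)
  also have "\<dots> = (\<Sum>m<K. \<Sum>m'<K. cos (2 * pi * real_of_int (int m - int m') * t))"
    by (intro sum.cong refl) (simp add: cos_diff[symmetric] algebra_simps)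
  finally show ?thesis unfolding fejer_def by simp
qed

lemma fejer_integrable: "fejer K integrable_on {a..b}"
  unfolding fejer_def by (intro integrable_continuous_real continuous_intros)

lemma fejer_has_integral:
  assumes "K > 0"
  shows "(fejer K has_integral 1) {-1/2..1/2}"
proof -
  have "((\<lambda>t. (1 / real K) * (\<Sum>m<K. \<Sum>m'<K. cos (2 * pi * real_of_int (int m - int m') * t))) has_integral
      (1 / real K) * (\<Sum>m<K. \<Sum>m'<K. if int m - int m' = 0 then 1 else 0)) {-1/2..1/2}"
    by (intro has_integral_mult_right has_integral_sum finite_lessThan cos_int_has_integral)
  moreover have "(\<Sum>m<K. \<Sum>m'<K. if int m - int m' = 0 then 1 else 0::real) = real K"
    by simp
  ultimately show ?thesis using assms by (simp add: fejer_eq_cos_sum[abs_def])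
qed

lemma half_le_sin:
  fixes x :: real assumes "0 \<le> x" "x \<le> pi/2"
  shows "x/2 \<le> sin x"
proof -
  have "\<bar>sin x - (\<Sum>m<3. sin_coeff m * x ^ m)\<bar> \<le> inverse (fact 3) * \<bar>x\<bar> ^ 3"
    by (rule Maclaurin_sin_bound)
  moreover have "(\<Sum>m<3. sin_coeff m * x ^ m) = x"
    by (simp add: numeral_3_eq_3 sin_coeff_def)
  ultimately have "\<bar>sin x - x\<bar> \<le> x * x\<^sup>2 / 6"
    using assms by (simp add: fact_numeral power2_eq_square power3_eq_cube)
  then have "x - x * x\<^sup>2 / 6 \<le> sin x"
    unfolding abs_le_iff by linarith
  moreover have "x\<^sup>2 \<le> 3"
  proof -
    have "pi \<le> 3.2" using pi_approx(2) by simp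
    then have "x \<le> 1.6" using assms by linarith
    then have "x\<^sup>2 \<le> 1.6\<^sup>2" using assms by (intro power_mono) auto
    then show ?thesis by (simp add: power2_eq_square)
  qed
  ultimately show ?thesis
    using assms mult_left_mono[of "x\<^sup>2" 3 x] by simp
qed

lemma three_abs_le_norm_cis_minus_one:
  fixes t :: real assumes "\<bar>t\<bar> \<le> 1/2"
  shows "3 * \<bar>t\<bar> \<le> cmod (cis (2 * pi * t) - 1)"
proof -
  have "(cmod (cis (2 * pi * t) - 1))\<^sup>2 = (cos (2 * pi * t) - 1)\<^sup>2 + (sin (2 * pi * t))\<^sup>2"
    by (simp add: cmod_power2)
  also have "\<dots> = 2 - 2 * cos (2 * (pi * t))"
    by (simp add: power2_eq_square algebra_simps)
  also have "\<dots> = 4 * (sin (pi * t))\<^sup>2"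
    by (simp add: cos_double_sin)
  finally have eq: "(cmod (cis (2 * pi * t) - 1))\<^sup>2 = (2 * sin (pi * \<bar>t\<bar>))\<^sup>2"
    by (cases "t \<ge> 0") (simp_all add: power2_eq_square)
  have "3 * \<bar>t\<bar> \<le> pi * \<bar>t\<bar>"
    using pi_gt3 by (intro mult_right_mono) auto
  also have "\<dots> \<le> 2 * sin (pi * \<bar>t\<bar>)"
    using half_le_sin[of "pi * \<bar>t\<bar>"] assms by auto
  also have "\<dots> = cmod (cis (2 * pi * t) - 1)"
    using eq by (rule power2_eq_imp_eq[symmetric]) (use calculation in auto)
  finally show ?thesis .
qed

lemma fejer_le:
  assumes K: "K > 0" and t: "t \<noteq> 0" "\<bar>t\<bar> \<le> 1/2"
  shows "fejer K t \<le> 1 / (2 * real K * t\<^sup>2)"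
proof -
  define z where "z = cis (2 * pi * t)"
  have "(\<Sum>m<K. z ^ m) = (\<Sum>m<K. cis (real m * (2 * pi * t)))"
    unfolding z_def by (intro sum.cong refl) (rule Complex.DeMoivre)
  then have "Re (\<Sum>m<K. z ^ m) = (\<Sum>m<K. cos (2 * pi * real m * t))"
    and "Im (\<Sum>m<K. z ^ m) = (\<Sum>m<K. sin (2 * pi * real m * t))"
    by (simp_all add: algebra_simps)
  then have fejer_eq: "fejer K t = (1 / real K) * (cmod (\<Sum>m<K. z ^ m))\<^sup>2"
    unfolding fejer_def cmod_power2 by simp
  have z_lower: "3 * \<bar>t\<bar> \<le> cmod (z - 1)"
    unfolding z_def by (rule three_abs_le_norm_cis_minus_one[OF t(2)])
  then have "z \<noteq> 1" using t by auto
  moreover have "cmod (z ^ K - 1) \<le> 2"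
    using norm_triangle_ineq4[of "z ^ K" 1] by (simp add: z_def norm_power)
  ultimately have "cmod (\<Sum>m<K. z ^ m) \<le> 2 / (3 * \<bar>t\<bar>)"
    using geometric_sum[of z K] z_lower t by (simp add: norm_divide) (rule frac_le, auto)
  then have "(cmod (\<Sum>m<K. z ^ m))\<^sup>2 \<le> 4 / (9 * t\<^sup>2)"
    using power_mono[of _ _ 2] by (fastforce simp: power_divide power_mult_distrib)
  then have "fejer K t \<le> (1 / real K) * (4 / (9 * t\<^sup>2))"
    unfolding fejer_eq using K by (intro mult_left_mono) auto
  also have "\<dots> \<le> 1 / (2 * real K * t\<^sup>2)"
    using K t by (simp add: field_simps)
  finally show ?thesis .
qed

lemma fejer_tails_le:
  assumes K: "K > 0" and a: "0 < a" "a \<le> 1/2"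
  shows "integral {-1/2..-a} (fejer K) + integral {a..1/2} (fejer K) \<le> 1 / (real K * a)"
proof -
  define F where "F t = - 1 / (2 * real K * t)" for t
  have F: "((\<lambda>t. 1 / (2 * real K * t\<^sup>2)) has_integral F d - F c) {c..d}"
    if "c \<le> d" "0 < c \<or> d < 0" for c d
  proof (rule has_integral_real_derivative[OF \<open>c \<le> d\<close>])
    fix x assume "x \<in> {c..d}"
    then have "x \<noteq> 0" using that by auto
    then show "(F has_real_derivative 1 / (2 * real K * x\<^sup>2)) (at x)"
      unfolding F_def using K by (auto intro!: derivative_eq_intros simp: field_simps power2_eq_square)
  qed
  have "integral {-1/2..-a} (fejer K) \<le> F (-a) - F (-1/2)"
    using a fejer_le[OF K] by (intro has_integral_le[OF integrable_integral[OF fejer_integrable] F]) auto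
  moreover have "integral {a..1/2} (fejer K) \<le> F (1/2) - F a"
    using a fejer_le[OF K] by (intro has_integral_le[OF integrable_integral[OF fejer_integrable] F]) auto
  ultimately show ?thesis using K a by (simp add: F_def field_simps)
qed

section \<open>Sawtooth sums against the Fejer kernel\<close>

definition sawtooth_sum :: "(nat \<Rightarrow> real) \<Rightarrow> nat \<Rightarrow> real \<Rightarrow> real" where
  "sawtooth_sum y N x = (\<Sum>i<N. sawtooth (x - y i))"

definition exp_sum_norm :: "(nat \<Rightarrow> real) \<Rightarrow> nat \<Rightarrow> nat \<Rightarrow> real" where
  "exp_sum_norm y N k = cmod (\<Sum>i<N. cis (2 * pi * real k * y i))"

lemma exp_sum_norm_nonneg: "0 \<le> exp_sum_norm y N k"
  unfolding exp_sum_norm_def by simp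

lemma norm_exp_sum_int:
  fixes d :: int
  shows "cmod (\<Sum>i<N. cis (2 * pi * d * y i)) = exp_sum_norm y N (nat \<bar>d\<bar>)"
proof (cases "d \<ge> 0")
  case False
  have "(\<Sum>i<N. cis (2 * pi * d * y i)) = cnj (\<Sum>i<N. cis (2 * pi * real (nat \<bar>d\<bar>) * y i))"
    using False by (simp add: cis_cnj)
  then show ?thesis unfolding exp_sum_norm_def by (simp only: complex_mod_cnj)
qed (simp add: exp_sum_norm_def)

lemma abs_sum_sin_le_exp_sum_norm:
  fixes d :: int
  shows "\<bar>\<Sum>i<N. sin (2 * pi * d * (z - y i))\<bar> \<le> exp_sum_norm y N (nat \<bar>d\<bar>)"
proof -
  have "(\<Sum>i<N. sin (2 * pi * d * (z - y i))) = Im (cis (2 * pi * d * z) * cnj (\<Sum>i<N. cis (2 * pi * d * y i)))"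
    by (simp add: sum_distrib_left cis_cnj cis_mult algebra_simps)
  also have "\<bar>\<dots>\<bar> \<le> cmod (\<Sum>i<N. cis (2 * pi * d * y i))"
    by (rule order_trans[OF abs_Im_le_cmod]) (simp only: norm_mult norm_cis complex_mod_cnj mult_1_left order_refl)
  finally show ?thesis unfolding norm_exp_sum_int .
qed

lemma exp_sum_norm_uminus: "exp_sum_norm (\<lambda>i. - y i) N k = exp_sum_norm y N k"
  using norm_exp_sum_int[where d="- int k"] by (simp add: exp_sum_norm_def)

lemma sawtooth_fejer_has_integral:
  "((\<lambda>t. sawtooth (w + t) * fejer K t) has_integral
     (1 / real K) * (\<Sum>m<K. \<Sum>m'<K. sawtooth_coeff w (int m - int m'))) {-1/2..1/2}"
proof -
  have "((\<lambda>t. (1 / real K) * (\<Sum>m<K. \<Sum>m'<K. sawtooth (w + t) * cos (2 * pi * real_of_int (int m - int m') * t)))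
      has_integral (1 / real K) * (\<Sum>m<K. \<Sum>m'<K. sawtooth_coeff w (int m - int m'))) {-1/2..1/2}"
    by (intro has_integral_mult_right has_integral_sum finite_lessThan sawtooth_cos_has_integral)
  then show ?thesis by (simp add: fejer_eq_cos_sum sum_distrib_left mult_ac)
qed

lemma abs_sum_sawtooth_coeff_le:
  fixes d :: int
  shows "\<bar>\<Sum>i<N. sawtooth_coeff (z - y i) d\<bar>
    \<le> (if d = 0 then 0 else exp_sum_norm y N (nat \<bar>d\<bar>) / (2 * pi * real (nat \<bar>d\<bar>)))"
proof (cases "d = 0")
  case False
  then have "\<bar>\<Sum>i<N. sawtooth_coeff (z - y i) d\<bar> = \<bar>\<Sum>i<N. sin (2 * pi * d * (z - y i))\<bar> / (2 * pi * \<bar>d\<bar>)"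
    by (simp add: sawtooth_coeff_def sum_divide_distrib[symmetric] abs_mult)
  also have "\<dots> \<le> exp_sum_norm y N (nat \<bar>d\<bar>) / (2 * pi * \<bar>d\<bar>)"
    using False by (intro divide_right_mono abs_sum_sin_le_exp_sum_norm) auto
  finally show ?thesis using False by simp
qed (simp add: sawtooth_coeff_def)

lemma sum_nat_dist_le:
  fixes h :: "nat \<Rightarrow> real"
  assumes h: "\<And>k. 0 \<le> h k" and m: "m < K"
  shows "(\<Sum>m'<K. if m = m' then 0 else h (nat \<bar>int m - int m'\<bar>)) \<le> 2 * (\<Sum>k\<in>{1..<K}. h k)"
proof -
  have below: "(\<Sum>m'<K. if m' < m then h (m - m') else 0) \<le> (\<Sum>k\<in>{1..<K}. h k)"
  proof -
    have "(\<Sum>m'<K. if m' < m then h (m - m') else 0) = (\<Sum>m'\<in>{..<m}. h (m - m'))"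
    proof -
      have "{..<K} \<inter> {m'. m' < m} = {..<m}" using m by auto
      then show ?thesis by (simp add: sum.If_cases)
    qed
    also have "\<dots> = (\<Sum>k\<in>(\<lambda>m'. m - m') ` {..<m}. h k)"
      by (subst sum.reindex) (auto simp: inj_on_def)
    also have "\<dots> \<le> (\<Sum>k\<in>{1..<K}. h k)"
      using m h by (intro sum_mono2) auto
    finally show ?thesis .
  qed
  have above: "(\<Sum>m'<K. if m < m' then h (m' - m) else 0) \<le> (\<Sum>k\<in>{1..<K}. h k)"
  proof -
    have "(\<Sum>m'<K. if m < m' then h (m' - m) else 0) = (\<Sum>m'\<in>{m<..<K}. h (m' - m))"
    proof -
      have "{..<K} \<inter> {m'. m < m'} = {m<..<K}" by auto
      then show ?thesis by (simp add: sum.If_cases)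
    qed
    also have "\<dots> = (\<Sum>k\<in>(\<lambda>m'. m' - m) ` {m<..<K}. h k)"
      by (subst sum.reindex) (auto simp: inj_on_def)
    also have "\<dots> \<le> (\<Sum>k\<in>{1..<K}. h k)"
      using h by (intro sum_mono2) auto
    finally show ?thesis .
  qed
  have "(if m = m' then 0 else h (nat \<bar>int m - int m'\<bar>)) =
     (if m' < m then h (m - m') else 0) + (if m < m' then h (m' - m) else 0)" for m'
    by (cases m' m rule: linorder_cases) (auto simp: nat_diff_distrib)
  then show ?thesis using below above by (simp add: sum.distrib)
qed

lemma sawtooth_sum_fejer_integral_bound:
  assumes K: "K > 0"
  obtains I where "((\<lambda>t. sawtooth_sum y N (z + t) * fejer K t) has_integral I) {-1/2..1/2}"
    and "\<bar>I\<bar> \<le> (\<Sum>k\<in>{1..<K}. exp_sum_norm y N k / (pi * real k))"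
proof
  define G where "G d = (\<Sum>i<N. sawtooth_coeff (z - y i) d)" for d
  define h where "h k = exp_sum_norm y N k / (2 * pi * real k)" for k
  have "((\<lambda>t. \<Sum>i<N. sawtooth ((z - y i) + t) * fejer K t) has_integral
     (\<Sum>i<N. (1 / real K) * (\<Sum>m<K. \<Sum>m'<K. sawtooth_coeff (z - y i) (int m - int m')))) {-1/2..1/2}"
    by (intro has_integral_sum finite_lessThan sawtooth_fejer_has_integral)
  then show "((\<lambda>t. sawtooth_sum y N (z + t) * fejer K t) has_integral
      (1 / real K) * (\<Sum>m<K. \<Sum>m'<K. G (int m - int m'))) {-1/2..1/2}"
    unfolding G_def sawtooth_sum_def
    by (simp add: sum_distrib_left sum_distrib_right sum.swap[of _ "{..<N}"] algebra_simps)
  have G_le: "\<bar>G d\<bar> \<le> (if d = 0 then 0 else h (nat \<bar>d\<bar>))" for d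
    unfolding G_def h_def by (rule abs_sum_sawtooth_coeff_le)
  have "\<bar>(1 / real K) * (\<Sum>m<K. \<Sum>m'<K. G (int m - int m'))\<bar>
      \<le> (1 / real K) * (\<Sum>m<K. \<Sum>m'<K. \<bar>G (int m - int m')\<bar>)"
  proof -
    have "\<bar>\<Sum>m<K. \<Sum>m'<K. G (int m - int m')\<bar> \<le> (\<Sum>m<K. \<Sum>m'<K. \<bar>G (int m - int m')\<bar>)"
      by (rule order.trans[OF sum_abs]) (intro sum_mono sum_abs)
    then show ?thesis by (simp add: abs_mult divide_right_mono)
  qed
  also have "\<dots> \<le> (1 / real K) * (\<Sum>m<K. 2 * (\<Sum>k\<in>{1..<K}. h k))"
  proof (intro mult_left_mono sum_mono)
    fix m assume "m \<in> {..<K}"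
    have "\<bar>G (int m - int m')\<bar> \<le> (if m = m' then 0 else h (nat \<bar>int m - int m'\<bar>))" for m'
      using G_le[of "int m - int m'"] by (cases "m = m'") auto
    then show "(\<Sum>m'<K. \<bar>G (int m - int m')\<bar>) \<le> 2 * (\<Sum>k\<in>{1..<K}. h k)"
      using \<open>m \<in> {..<K}\<close> exp_sum_norm_nonneg
      by (intro order.trans[OF sum_mono sum_nat_dist_le]) (auto simp: h_def)
  qed simp
  also have "\<dots> = (\<Sum>k\<in>{1..<K}. exp_sum_norm y N k / (pi * real k))"
    using K by (simp add: h_def sum_distrib_left)
  finally show "\<bar>(1 / real K) * (\<Sum>m<K. \<Sum>m'<K. G (int m - int m'))\<bar>
      \<le> (\<Sum>k\<in>{1..<K}. exp_sum_norm y N k / (pi * real k))" .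
qed

section \<open>Bounding sawtooth sums by exponential sums\<close>

lemma fejer_weighted_integral_lower_bound:
  fixes R :: "real \<Rightarrow> real"
  assumes K: "K > 0" and a: "0 < a" "a \<le> 1/2"
    and R: "((\<lambda>t. R t * fejer K t) has_integral I) {-1/2..1/2}"
    and R_bounded: "\<And>t. t \<in> {-1/2..1/2} \<Longrightarrow> \<bar>R t\<bar> \<le> M"
    and R_large: "\<And>t. t \<in> {-a..a} \<Longrightarrow> \<beta> \<le> R t" and \<beta>: "0 \<le> \<beta>"
  shows "\<beta> - (\<beta> + M) / (real K * a) \<le> I"
proof -
  define f where "f t = R t * fejer K t" for t
  have f_integrable: "f integrable_on {-1/2..1/2}" using R unfolding f_def by blast
  have split: "integral {-1/2..1/2} g = integral {-1/2..-a} g + integral {-a..a} g + integral {a..1/2} g"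
    if "g integrable_on {-1/2..1/2}" for g :: "real \<Rightarrow> real"
  proof -
    have "g integrable_on {-1/2..a}" using a by (intro integrable_subinterval_real[OF that]) auto
    then show ?thesis
      using a Henstock_Kurzweil_Integration.integral_combine[of "-1/2" a "1/2" g, OF _ _ that]
        Henstock_Kurzweil_Integration.integral_combine[of "-1/2" "-a" a g] by simp
  qed
  have lower: "c' * integral {c..d} (fejer K) \<le> integral {c..d} f"
    if "-1/2 \<le> c" "d \<le> 1/2" "\<And>t. t \<in> {c..d} \<Longrightarrow> c' \<le> R t" for c c' d
  proof -
    have "integral {c..d} (\<lambda>t. c' * fejer K t) \<le> integral {c..d} f"
      using that f_integrable fejer_nonneg unfolding f_def
      by (intro integral_le integrable_on_mult_right fejer_integrable mult_right_mono)
         (auto intro: integrable_subinterval_real)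
    then show ?thesis by simp
  qed
  have R_ge: "- M \<le> R t" if "t \<in> {-1/2..1/2}" for t using R_bounded[OF that] by linarith
  have M: "0 \<le> M" using R_bounded[of 0] by auto
  define T where "T = integral {-1/2..-a} (fejer K) + integral {a..1/2} (fejer K)"
  have mid: "integral {-a..a} (fejer K) = 1 - T"
    using split[OF fejer_integrable, of K] integral_unique[OF fejer_has_integral[OF K]]
    unfolding T_def by simp
  have "\<beta> * (1 - T) - M * T \<le> I"
  proof -
    have "I = integral {-1/2..-a} f + integral {-a..a} f + integral {a..1/2} f"
      using split[OF f_integrable] R unfolding f_def by (simp add: integral_unique)
    moreover have "- M * integral {-1/2..-a} (fejer K) \<le> integral {-1/2..-a} f"
      using a by (intro lower) (auto intro: R_ge)
    moreover have "- M * integral {a..1/2} (fejer K) \<le> integral {a..1/2} f"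
      using a by (intro lower) (auto intro: R_ge)
    moreover have "\<beta> * integral {-a..a} (fejer K) \<le> integral {-a..a} f"
      using a R_large by (intro lower) auto
    ultimately show ?thesis unfolding mid T_def by (simp add: algebra_simps)
  qed
  moreover have "(\<beta> + M) * T \<le> (\<beta> + M) * (1 / (real K * a))"
    unfolding T_def using fejer_tails_le[OF K a] \<beta> M by (intro mult_left_mono) auto
  ultimately show ?thesis by (simp add: algebra_simps)
qed

lemma abs_sawtooth_sum_le: "\<bar>sawtooth_sum y N x\<bar> \<le> real N / 2"
proof -
  have "\<bar>sawtooth_sum y N x\<bar> \<le> (\<Sum>i<N. \<bar>sawtooth (x - y i)\<bar>)"
    unfolding sawtooth_sum_def by (rule sum_abs)
  also have "\<dots> \<le> (\<Sum>i<N. 1/2)" by (intro sum_mono abs_sawtooth_le)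
  finally show ?thesis by simp
qed

lemma sawtooth_sum_decrease_le:
  assumes "0 \<le> h" shows "sawtooth_sum y N x - real N * h \<le> sawtooth_sum y N (x + h)"
proof -
  have "sawtooth (x - y i) - h \<le> sawtooth (x + h - y i)" for i
    using floor_mono[of "x - y i" "x + h - y i"] assms by (simp add: sawtooth_def frac_def)
  then have "(\<Sum>i<N. sawtooth (x - y i) - h) \<le> (\<Sum>i<N. sawtooth (x + h - y i))"
    by (rule sum_mono)
  then show ?thesis by (simp add: sawtooth_sum_def sum_subtractf)
qed

lemma sawtooth_sum_window_bound:
  assumes N: "N > 0" and a: "0 < a" "a \<le> 1/2" and \<sigma>: "\<bar>\<sigma>\<bar> = 1" and \<beta>: "0 \<le> \<beta>"
    and M: "\<And>x. \<bar>sawtooth_sum y N x\<bar> \<le> M"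
    and large: "\<And>t. t \<in> {-a..a} \<Longrightarrow> \<beta> \<le> \<sigma> * sawtooth_sum y N (z + t)"
  shows "\<beta> - (\<beta> + M) / (real N * a) \<le> (\<Sum>k\<in>{1..<N}. exp_sum_norm y N k / (pi * real k))"
proof -
  obtain I where I: "((\<lambda>t. sawtooth_sum y N (z + t) * fejer N t) has_integral I) {-1/2..1/2}"
    "\<bar>I\<bar> \<le> (\<Sum>k\<in>{1..<N}. exp_sum_norm y N k / (pi * real k))"
    using sawtooth_sum_fejer_integral_bound[OF N] by blast
  have "((\<lambda>t. \<sigma> * sawtooth_sum y N (z + t) * fejer N t) has_integral \<sigma> * I) {-1/2..1/2}"
    using has_integral_mult_right[OF I(1), of \<sigma>] by (simp add: mult.assoc)
  then have "\<beta> - (\<beta> + M) / (real N * a) \<le> \<sigma> * I"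
    using \<sigma> \<beta> M large by (intro fejer_weighted_integral_lower_bound[OF N a]) (auto simp: abs_mult)
  moreover have "\<sigma> * I \<le> \<bar>I\<bar>" using abs_ge_self[of "\<sigma> * I"] \<sigma> by (simp add: abs_mult)
  ultimately show ?thesis using I(2) by linarith
qed

lemma sawtooth_sum_value_bound:
  assumes N: "N > 0" and m: "m = \<bar>sawtooth_sum y N x\<^sub>0\<bar>" "0 < m"
    and M: "\<And>x. \<bar>sawtooth_sum y N x\<bar> \<le> M"
  shows "m / 2 - 2 - 4 * M / m \<le> (\<Sum>k\<in>{1..<N}. exp_sum_norm y N k / (pi * real k))"
proof -
  define a where "a = m / (4 * real N)"
  have a: "0 < a" "a \<le> 1/2"
    using abs_sawtooth_sum_le[of y N x\<^sub>0] m N by (auto simp: a_def field_simps)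
  have Na: "real N * a = m / 4" using N by (simp add: a_def)
  have "(m / 2 + M) / (real N * a) = 2 + 4 * M / m"
    using m(2) unfolding Na by (simp add: field_simps)
  moreover have "m / 2 - (m / 2 + M) / (real N * a) \<le> (\<Sum>k\<in>{1..<N}. exp_sum_norm y N k / (pi * real k))"
  proof (cases "sawtooth_sum y N x\<^sub>0 > 0")
    case True
    show ?thesis
    proof (rule sawtooth_sum_window_bound[OF N a _ _ M, of 1 _ "x\<^sub>0 + a"])
      fix t assume t: "t \<in> {-a..a}"
      have "sawtooth_sum y N x\<^sub>0 - real N * (a + t) \<le> sawtooth_sum y N (x\<^sub>0 + a + t)"
        using t sawtooth_sum_decrease_le[of "a + t" y N x\<^sub>0] by (simp add: add.assoc)
      moreover have "real N * (a + t) \<le> m / 2"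
        using t mult_left_mono[of t a "real N"] Na by (simp add: algebra_simps)
      ultimately show "m / 2 \<le> 1 * sawtooth_sum y N (x\<^sub>0 + a + t)" using True m by simp
    qed (use m in auto)
  next
    case False
    show ?thesis
    proof (rule sawtooth_sum_window_bound[OF N a _ _ M, of "-1" _ "x\<^sub>0 - a"])
      fix t assume t: "t \<in> {-a..a}"
      have "sawtooth_sum y N (x\<^sub>0 - a + t) - real N * (a - t) \<le> sawtooth_sum y N x\<^sub>0"
        using t sawtooth_sum_decrease_le[of "a - t" y N "x\<^sub>0 - a + t"] by simp
      moreover have "real N * (a - t) \<le> m / 2"
        using t mult_left_mono[of "- t" a "real N"] Na by (simp add: algebra_simps)
      ultimately show "m / 2 \<le> -1 * sawtooth_sum y N (x\<^sub>0 - a + t)" using False m by simp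
    qed (use m in auto)
  qed
  ultimately show ?thesis by simp
qed

lemma abs_sawtooth_sum_le_exp_sums:
  assumes N: "N > 0"
  shows "\<bar>sawtooth_sum y N x\<bar> \<le> 4 * (\<Sum>k\<in>{1..<N}. exp_sum_norm y N k / (pi * real k)) + 40"
    (is "_ \<le> 4 * ?S + 40")
proof -
  define M where "M = (SUP x. \<bar>sawtooth_sum y N x\<bar>)"
  have bdd: "bdd_above (range (\<lambda>x. \<bar>sawtooth_sum y N x\<bar>))"
    using abs_sawtooth_sum_le by (intro bdd_aboveI2) blast
  have M_upper: "\<bar>sawtooth_sum y N z\<bar> \<le> M" for z
    unfolding M_def by (rule cSUP_upper[OF _ bdd]) simp
  have "M \<le> 4 * ?S + 40"
  proof (rule ccontr)
    assume "\<not> ?thesis"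
    moreover have "0 \<le> ?S" using exp_sum_norm_nonneg by (intro sum_nonneg) simp
    ultimately have M_pos: "0 < M" by linarith
    then obtain x\<^sub>0 where x\<^sub>0: "M / 2 < \<bar>sawtooth_sum y N x\<^sub>0\<bar>"
      using less_cSUP_iff[OF _ bdd, of "M / 2"] unfolding M_def[symmetric] by auto
    define m where "m = \<bar>sawtooth_sum y N x\<^sub>0\<bar>"
    have "m / 2 - 2 - 4 * M / m \<le> ?S"
      using x\<^sub>0 M_pos by (intro sawtooth_sum_value_bound[OF N m_def _ M_upper]) (auto simp: m_def)
    moreover have "4 * M / m < 8" using x\<^sub>0 M_pos by (simp add: m_def field_simps)
    ultimately show False using x\<^sub>0 \<open>\<not> M \<le> 4 * ?S + 40\<close> unfolding m_def by linarith
  qed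
  then show ?thesis using M_upper[of x] by linarith
qed

section \<open>From sawtooth sums to the bias\<close>

lemma of_bool_less_eq_sawtooth:
  fixes y a :: real assumes "0 \<le> y" "y < 1" "0 \<le> a" "a \<le> 1"
  shows "of_bool (y < a) = a - y + 1/2 - sawtooth (y - a)"
proof -
  consider "y < a" "y - a = -1" | "y < a" "-1 < y - a" | "\<not> y < a" using assms by linarith
  then show ?thesis
  proof cases
    case 2
    then have "\<lfloor>y - a\<rfloor> = -1" by (intro floor_unique) auto
    then show ?thesis using 2 by (simp add: sawtooth_def frac_def)
  next
    case 3
    then have "\<lfloor>y - a\<rfloor> = 0" using assms by (intro floor_unique) auto
    then show ?thesis using 3 by (simp add: sawtooth_def frac_def)
  qed (simp add: sawtooth_def frac_def)
qed

lemma of_bool_le_eq_sawtooth: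
  fixes y b :: real assumes "0 \<le> y" "y < 1" "0 \<le> b" "b < 1"
  shows "of_bool (y \<le> b) = b - y + 1/2 + sawtooth (b - y)"
proof (cases "y \<le> b")
  case True
  then have "\<lfloor>b - y\<rfloor> = 0" using assms by (intro floor_unique) auto
  then show ?thesis using True by (simp add: sawtooth_def frac_def)
next
  case False
  then have "\<lfloor>b - y\<rfloor> = -1" using assms by (intro floor_unique) auto
  then show ?thesis using False by (simp add: sawtooth_def frac_def)
qed

lemma count_less_eq_sawtooth_sum:
  assumes y: "\<And>i. i < N \<Longrightarrow> 0 \<le> y i \<and> y i < 1" and c: "0 \<le> c" "c \<le> 1"
  shows "(\<Sum>i<N. of_bool (y i < c)) - real N * c = (\<Sum>i<N. 1/2 - y i) - sawtooth_sum (\<lambda>i. - y i) N (- c)"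
proof -
  have "(\<Sum>i<N. of_bool (y i < c)) = (\<Sum>i<N. c - y i + 1/2 - sawtooth (y i - c))"
    using y c by (intro sum.cong refl of_bool_less_eq_sawtooth) auto
  then show ?thesis unfolding sawtooth_sum_def by (simp add: sum_subtractf sum.distrib algebra_simps)
qed

lemma count_le_eq_sawtooth_sum:
  assumes y: "\<And>i. i < N \<Longrightarrow> 0 \<le> y i \<and> y i < 1" and b: "0 \<le> b" "b < 1"
  shows "(\<Sum>i<N. of_bool (y i \<le> b)) - real N * b = (\<Sum>i<N. 1/2 - y i) + sawtooth_sum y N b"
proof -
  have "(\<Sum>i<N. of_bool (y i \<le> b)) = (\<Sum>i<N. b - y i + 1/2 + sawtooth (b - y i))"
    using y b by (intro sum.cong refl of_bool_le_eq_sawtooth) auto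
  then show ?thesis unfolding sawtooth_sum_def by (simp add: sum_subtractf sum.distrib algebra_simps)
qed

lemma interval_count_deviation_le:
  assumes y: "\<And>i. i < N \<Longrightarrow> 0 \<le> y i \<and> y i < 1" and ab: "0 \<le> a" "a \<le> b" "b \<le> 1"
    and B: "\<And>x. \<bar>sawtooth_sum y N x\<bar> \<le> B" "\<And>x. \<bar>sawtooth_sum (\<lambda>i. - y i) N x\<bar> \<le> B"
  shows "\<bar>real (card {i. i < N \<and> y i \<in> {a..b}}) - real N * (b - a)\<bar> \<le> 2 * B"
proof -
  define C where "C = (\<Sum>i<N. 1/2 - y i)"
  define below where "below c = (\<Sum>i<N. of_bool (y i < c)) - real N * c - C" for c
  define upto where "upto c = (\<Sum>i<N. of_bool (y i \<le> c)) - real N * c - C" for c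
  have "\<bar>upto b\<bar> \<le> B"
  proof (cases "b < 1")
    case True
    then show ?thesis using count_le_eq_sawtooth_sum[of N y b, OF y] ab B(1) by (simp add: upto_def C_def)
  next
    case False
    have "of_bool (y i \<le> b) = (of_bool (y i < 1) :: real)" if "i < N" for i
      using y[OF that] False ab by auto
    then have "upto b = below 1" unfolding upto_def below_def using False ab by simp
    then show ?thesis using count_less_eq_sawtooth_sum[of N y 1, OF y] B(2) by (simp add: below_def C_def)
  qed
  moreover have "\<bar>below a\<bar> \<le> B"
    using count_less_eq_sawtooth_sum[of N y a, OF y] ab B(2) by (simp add: below_def C_def)
  moreover have "real (card {i. i < N \<and> y i \<in> {a..b}}) - real N * (b - a) = upto b - below a"
  proof -
    have "{i. i < N \<and> y i \<in> {a..b}} = {..<N} \<inter> {i. y i \<le> b \<and> \<not> y i < a}" by auto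
    then have "real (card {i. i < N \<and> y i \<in> {a..b}}) = (\<Sum>i<N. of_bool (y i \<le> b \<and> \<not> y i < a))"
      by simp
    also have "\<dots> = (\<Sum>i<N. of_bool (y i \<le> b)) - (\<Sum>i<N. of_bool (y i < a))"
      using ab by (simp add: sum_subtractf[symmetric] of_bool_def) (intro sum.cong; auto)
    finally show ?thesis unfolding upto_def below_def by (simp add: algebra_simps)
  qed
  ultimately show ?thesis by linarith
qed

lemma bias_le_exp_sums:
  "bias n r \<le> 8 * (\<Sum>k\<in>{1..<n}. exp_sum_norm (\<lambda>i. frac (r i)) n k / (pi * real k)) + 80"
proof -
  define y where "y i = frac (r i)" for i
  define B where "B = 4 * (\<Sum>k\<in>{1..<n}. exp_sum_norm y n k / (pi * real k)) + 40"
  have sawtooth_sum_le: "\<bar>sawtooth_sum y' n x\<bar> \<le> B" if "exp_sum_norm y' n = exp_sum_norm y n" for y' x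
  proof (cases "n = 0")
    case True
    then show ?thesis using exp_sum_norm_nonneg by (simp add: B_def sawtooth_sum_def sum_nonneg)
  next
    case False
    then show ?thesis using abs_sawtooth_sum_le_exp_sums[of n y' x] that by (simp add: B_def)
  qed
  have "exp_sum_norm (\<lambda>i. - y i) n = exp_sum_norm y n"
    by (rule ext) (rule exp_sum_norm_uminus)
  moreover have "0 \<le> y i \<and> y i < 1" for i by (simp add: y_def frac_lt_1)
  ultimately have "\<bar>real (card {i. i < n \<and> y i \<in> {a..b}}) - real n * (b - a)\<bar> \<le> 2 * B"
    if "0 \<le> a" "a \<le> b" "b \<le> 1" for a b
    using that sawtooth_sum_le by (intro interval_count_deviation_le) auto
  moreover have "y = (\<lambda>i. frac (r i))" by (simp add: y_def fun_eq_iff)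
  ultimately show ?thesis
    unfolding bias_def
  proof (intro cSUP_least)
    have "(0, 0) \<in> {(a, b). 0 \<le> a \<and> a \<le> b \<and> b \<le> (1::real)}" by simp
    then show "{(a, b). 0 \<le> a \<and> a \<le> b \<and> b \<le> (1::real)} \<noteq> {}" by blast
  qed (auto simp: B_def)
qed

section \<open>Hadamard powers on the unit circle\<close>

lemma coeff_hadamard_pow:
  assumes "k > 0" shows "coeff (hadamard_pow g k) j = coeff g j ^ k"
proof (cases "j \<le> degree g")
  case True
  then show ?thesis unfolding hadamard_pow_def
    by (simp add: nth_default_def del: upt_Suc)
next
  case False
  then show ?thesis using assms unfolding hadamard_pow_def
    by (simp add: nth_default_def coeff_eq_0 del: upt_Suc)
qed

lemma sum_if_inj_on_power:
  fixes c :: "nat \<Rightarrow> 'a::comm_semiring_1"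
  assumes inj: "inj_on v {..<n}" and k: "k > 0"
  shows "(\<Sum>i<n. if v i = j then c i else 0) ^ k = (\<Sum>i<n. if v i = j then c i ^ k else 0)"
proof (cases "\<exists>i\<^sub>0<n. v i\<^sub>0 = j")
  case True
  then obtain i\<^sub>0 where i\<^sub>0: "i\<^sub>0 < n" "v i\<^sub>0 = j" by blast
  have "(\<Sum>i<n. if v i = j then X i else 0) = X i\<^sub>0" for X :: "nat \<Rightarrow> 'a"
  proof -
    have "(\<Sum>i<n. if v i = j then X i else 0) = (\<Sum>i<n. if i = i\<^sub>0 then X i else 0)"
      using inj i\<^sub>0 by (intro sum.cong refl) (auto simp: inj_on_def)
    then show ?thesis using i\<^sub>0 by simp
  qed
  then show ?thesis by simp
next
  case False
  then show ?thesis using k by (simp add: sum.neutral zero_power)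
qed

lemma poly_hadamard_pow_sum_monom:
  fixes c :: "nat \<Rightarrow> complex"
  assumes inj: "inj_on v {..<n}" and k: "k > 0"
  shows "poly (hadamard_pow (\<Sum>i<n. monom (c i) (v i)) k) z = (\<Sum>i<n. c i ^ k * z ^ v i)"
proof -
  have "hadamard_pow (\<Sum>i<n. monom (c i) (v i)) k = (\<Sum>i<n. monom (c i ^ k) (v i))"
    by (rule poly_eqI)
       (simp add: coeff_hadamard_pow[OF k] coeff_sum coeff_monom sum_if_inj_on_power[OF inj k])
  then show ?thesis by (simp add: poly_sum poly_monom)
qed

lemma norm_poly_le_circ_norm:
  assumes "cmod z = 1" shows "cmod (poly p z) \<le> circ_norm p"
proof -
  have "bounded ((\<lambda>z. cmod (poly p z)) ` sphere 0 1)"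
    by (intro compact_imp_bounded compact_continuous_image compact_sphere continuous_intros)
  then show ?thesis
    unfolding circ_norm_def using assms by (intro cSUP_upper bounded_imp_bdd_above) auto
qed

lemma exp_sum_norm_le_circ_norm:
  assumes inj: "inj_on v {..<n}" and k: "k > 0"
  shows "exp_sum_norm (\<lambda>i. frac (s i + real (v i) * t)) n k
     \<le> circ_norm (hadamard_pow (\<Sum>i<n. monom (cis (2 * pi * s i)) (v i)) k)"
proof -
  have cis_frac: "cis (2 * pi * real k * frac r) = cis (2 * pi * real k * r)" for r
  proof -
    have "2 * pi * real k * frac r = 2 * pi * real k * r - 2 * pi * (real k * of_int \<lfloor>r\<rfloor>)"
      by (simp add: frac_def algebra_simps)
    moreover have "cis (2 * pi * (real k * of_int \<lfloor>r\<rfloor>)) = 1"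
      by (rule cis_multiple_2pi) simp
    ultimately show ?thesis by (simp add: cis_divide[symmetric])
  qed
  have "cis (2 * pi * real k * frac (s i + real (v i) * t))
      = cis (2 * pi * s i) ^ k * cis (2 * pi * real k * t) ^ v i" for i
    unfolding cis_frac Complex.DeMoivre cis_mult by (simp add: algebra_simps)
  then have "exp_sum_norm (\<lambda>i. frac (s i + real (v i) * t)) n k
      = cmod (\<Sum>i<n. cis (2 * pi * s i) ^ k * cis (2 * pi * real k * t) ^ v i)"
    by (simp add: exp_sum_norm_def)
  also have "\<dots> \<le> circ_norm (hadamard_pow (\<Sum>i<n. monom (cis (2 * pi * s i)) (v i)) k)"
    unfolding poly_hadamard_pow_sum_monom[OF inj k, symmetric] by (rule norm_poly_le_circ_norm) simp
  finally show ?thesis .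
qed

lemma circ_norm_nonneg: "0 \<le> circ_norm p"
  by (rule order_trans[OF norm_ge_zero norm_poly_le_circ_norm[of 1]]) simp

theorem lemma4p2:
  "\<exists>c::real. c > 0 \<and>
    (\<forall>(n::nat) (v::nat \<Rightarrow> nat) (s::nat \<Rightarrow> real) (t::real).
      inj_on v {..<n} \<longrightarrow> (\<forall>i<n. 0 \<le> s i \<and> s i < 1) \<longrightarrow>
      bias n (\<lambda>i. s i + real (v i) * t)
        \<le> c * (1 + (\<Sum>k=1..n. circ_norm (hadamard_pow
               (\<Sum>i<n. monom (cis (2 * pi * s i)) (v i)) k) / real k)))"
proof (intro exI[of _ 80] conjI allI impI)
  fix n :: nat and v :: "nat \<Rightarrow> nat" and s :: "nat \<Rightarrow> real" and t :: real
  assume inj: "inj_on v {..<n}"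
  define y where "y i = frac (s i + real (v i) * t)" for i
  define C where "C k = circ_norm (hadamard_pow (\<Sum>i<n. monom (cis (2 * pi * s i)) (v i)) k)" for k
  have "exp_sum_norm y n k / (pi * real k) \<le> C k / real k" if "k \<in> {1..<n}" for k
    using that exp_sum_norm_le_circ_norm[OF inj, of k s t] exp_sum_norm_nonneg[of y n k] pi_gt3
    unfolding y_def[abs_def] C_def by (intro frac_le) auto
  then have "(\<Sum>k\<in>{1..<n}. exp_sum_norm y n k / (pi * real k)) \<le> (\<Sum>k=1..n. C k / real k)"
    using circ_norm_nonneg by (intro order.trans[OF sum_mono sum_mono2]) (auto simp: C_def)
  moreover have "0 \<le> (\<Sum>k=1..n. C k / real k)"
    using circ_norm_nonneg by (intro sum_nonneg) (simp add: C_def)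
  ultimately show "bias n (\<lambda>i. s i + real (v i) * t) \<le> 80 * (1 + (\<Sum>k=1..n. C k / real k))"
    using bias_le_exp_sums[of n "\<lambda>i. s i + real (v i) * t"] unfolding y_def[abs_def] distrib_left by linarith
qed simp

end
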